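(* Let $1\le l\le r$ and consider a canonical noiseless MMV model $B=AX$ in which $A$ satisfies $0\le\delta^L_{2k-r+l}(A)<1$ and the nonzero rows of $X$ are in general position. Let $I\subset\{1,\dots,n\}$ satisfy $|I|\le\min(2(k-r)+l,\,k)$, $|I\setminus\operatorname{supp}X|\le k-r+l$ and $|I\cap\operatorname{supp}X|\ge k-r+1$. Then for every $j\in I$, the following are equivalent: (a) $j\in\operatorname{supp}X$; (b) $\operatorname{rank}[A_{I\setminus\{j\}}~B]=\operatorname{rank}[A_I~B]$; (c) $\mathbf a_j^{*}P^\perp_{R([A_{I\setminus\{j\}}~B])}\mathbf a_j=0$.
   Context: Canonical MMV setting: $m,n,r,k$ are positive integers with $r\le m<n$ and $r\le k$. $A\in\mathbb{R}^{m\times n}$ is the sensing matrix with columns $\mathbf a_1,\dots,\mathbf a_n$; $X\in\mathbb{R}^{n\times r}$ has rows $\mathbf x^1,\dots,\mathbf x^n$, $\operatorname{supp}X=\{i:\mathbf x^i\neq 0\}$ and $|\operatorname{supp}X|=k$; $B=AX\in\mathbb{R}^{m\times r}$ has full column rank $r$. For an index set $I$, $A_I$ is the submatrix of $A$ formed by the columns indexed by $I$, and $[A_I~B]$ denotes horizontal concatenation. $R(M)$ is the column space of $M$, $P_{R(M)}$ the orthogonal projection onto it, and $P^\perp_{R(M)}=\mathrm{Id}-P_{R(M)}$; $^*$ denotes transpose. The lower restricted isometry constant $\delta^L_s(A)$ is the smallest $\delta\ge0$ such that $(1-\delta)\|\mathbf x\|_2^2\le\|A\mathbf x\|_2^2$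 for all $\mathbf x$ with at most $s$ nonzero entries. "The nonzero rows of $X$ are in general position" means any $r$ of the $k$ nonzero rows of $X$ are linearly independent. *)

theory Defs
  imports "HOL-Analysis.Analysis"
begin

definition row_supp :: "real^'r^'n \<Rightarrow> 'n set" where
  "row_supp X = {i. row i X \<noteq> 0}"

definition lower_ric :: "nat \<Rightarrow> real^'n^'m \<Rightarrow> real" where
  "lower_ric s A = Inf {d. 0 \<le> d \<and>
      (\<forall>x::real^'n. card {i. x $ i \<noteq> 0} \<le> s \<longrightarrow> (1 - d) * (norm x)\<^sup>2 \<le> (norm (A *v x))\<^sup>2)}"

definition concat_cols :: "real^'n^'m \<Rightarrow> 'n set \<Rightarrow> real^'r^'m \<Rightarrow> (real^'m) set" where
  "concat_cols A I B = {column i A | i. i \<in> I} \<union> columns B"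

definition rank_concat :: "real^'n^'m \<Rightarrow> 'n set \<Rightarrow> real^'r^'m \<Rightarrow> nat" where
  "rank_concat A I B = dim (span (concat_cols A I B))"

definition orth_proj :: "(real^'m) set \<Rightarrow> real^'m \<Rightarrow> real^'m" where
  "orth_proj S x = (THE p. p \<in> S \<and> (\<forall>y\<in>S. orthogonal (x - p) y))"

definition orth_proj_perp :: "(real^'m) set \<Rightarrow> real^'m \<Rightarrow> real^'m" where
  "orth_proj_perp S x = x - orth_proj S x"

end

theory Submission imports Defs begin

(* Write S = supp X, J = I - {j} and C = [A_J B].  Both (b) and (c)
   say that the column a_j lies in R(C): for (b) because adding a vector to a
   spanning set keeps the dimension iff the vector is already in the span, for (c)
   because a^* P^perp a = |P^perp a|^2.  So everything reduces to
   a_j \<in> R(C) \<longleftrightarrow> j \<in> S.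
   (\<Rightarrow>) If a_j = A y with supp y \<subseteq> J \<union> S (every vector of R(C) has this form) and
   j \<notin> S, then z = e_j - y is a nonzero kernel vector of A supported in I \<union> S, whose
   size is at most 2k - r + l; this contradicts the lower RIC being < 1.
   (\<Leftarrow>) The index set S - J = {j} \<union> (S - I) has at most r elements, so by general
   position the rows x^i (i \<in> S - J) are independent and some c has x^j c = 1 and
   x^i c = 0 for the other i \<in> S - J.  Then B c = \<Sum>_i (x^i c) a_i exhibits a_j
   as B c minus a combination of columns a_i with i \<in> J. *)

lemma orth_proj_span_eq:
  fixes x y z :: "real^'m"
  assumes y: "y \<in> span T" and z: "\<And>w. w \<in> span T \<Longrightarrow> orthogonal z w" and xyz: "x = y + z"
  shows "orth_proj (span T) x = y"
  unfolding orth_proj_def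
proof (rule the_equality)
  show "y \<in> span T \<and> (\<forall>w\<in>span T. orthogonal (x - y) w)" using y z xyz by auto
next
  fix p assume p: "p \<in> span T \<and> (\<forall>w\<in>span T. orthogonal (x - p) w)"
  have yp: "y - p \<in> span T" using p y by (simp add: span_diff)
  have "(y - p) \<bullet> (y - p) = (x - p) \<bullet> (y - p) - z \<bullet> (y - p)"
    using xyz by (simp add: algebra_simps)
  also have "\<dots> = 0" using p z[OF yp] yp by (simp add: orthogonal_def)
  finally show "p = y" by simp
qed

lemma inner_orth_proj_perp_eq_0_iff:
  fixes x :: "real^'m"
  shows "x \<bullet> orth_proj_perp (span T) x = 0 \<longleftrightarrow> x \<in> span T"
proof -
  obtain y z where y: "y \<in> span T" and z: "\<And>w. w \<in> span T \<Longrightarrow> orthogonal z w"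
    and xyz: "x = y + z"
    using orthogonal_subspace_decomp_exists by blast
  have perp: "orth_proj_perp (span T) x = z"
    using orth_proj_span_eq[OF y z xyz] xyz by (simp add: orth_proj_perp_def)
  have "y \<bullet> z = 0" using z[OF y] by (simp add: orthogonal_def inner_commute)
  then have "x \<bullet> z = z \<bullet> z" using xyz by (simp add: inner_add_left)
  moreover have "x \<in> span T \<longleftrightarrow> z = 0"
  proof
    assume "x \<in> span T"
    then have "z \<in> span T" using xyz y by (metis add_diff_cancel_left' span_diff)
    then show "z = 0" using z[of z] by (simp add: orthogonal_def)
  qed (use xyz y in simp)
  ultimately show ?thesis using perp by simp
qed

lemma rank_concat_remove_eq_iff:
  assumes "j \<in> I"
  shows "rank_concat A (I - {j}) B = rank_concat A I B
         \<longleftrightarrow> column j A \<in> span (concat_cols A (I - {j}) B)"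
proof -
  have "concat_cols A I B = insert (column j A) (concat_cols A (I - {j}) B)"
    using assms unfolding concat_cols_def by auto
  then show ?thesis by (simp add: rank_concat_def dim_insert)
qed

lemma matrix_vector_mult_in_span_columns:
  fixes B :: "real^'r^'m"
  shows "B *v c \<in> span (columns B)"
proof -
  have "B *v c = (\<Sum>q\<in>UNIV. c$q *\<^sub>R column q B)"
    by (simp add: matrix_mult_sum scalar_mult_eq_scaleR)
  also have "\<dots> \<in> span (columns B)"
    by (intro span_sum span_scale span_base) (auto simp: columns_def)
  finally show ?thesis .
qed

lemma span_concat_cols_subset:
  fixes A :: "real^'n^'m" and X :: "real^'r^'n"
  shows "span (concat_cols A J (A ** X))
         \<subseteq> {A *v y | y. \<forall>i. i \<notin> J \<union> row_supp X \<longrightarrow> y$i = 0}"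
    (is "_ \<subseteq> ?V")
proof (rule span_minimal)
  have "?V = (\<lambda>y. A *v y) ` {y. \<forall>i. i \<notin> J \<union> row_supp X \<longrightarrow> y$i = 0}" by blast
  moreover have "subspace {y::real^'n. \<forall>i. i \<notin> J \<union> row_supp X \<longrightarrow> y$i = 0}"
    unfolding subspace_def by simp
  ultimately show "subspace ?V"
    by (simp add: linear_subspace_image[OF matrix_vector_mul_linear])
  show "concat_cols A J (A ** X) \<subseteq> ?V"
  proof
    fix v assume "v \<in> concat_cols A J (A ** X)"
    then consider i where "i \<in> J" "v = column i A" | q where "v = column q (A ** X)"
      unfolding concat_cols_def columns_def by blast
    then show "v \<in> ?V"
    proof cases
      case 1
      then have "v = A *v axis i 1" by (simp add: matrix_vector_mult_basis)
      moreover have "axis i 1 $ i' = (0::real)" if "i' \<notin> J \<union> row_supp X" for i'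
        using 1 that by (auto simp: axis_def)
      ultimately show ?thesis by blast
    next
      case 2
      have "v = A *v (X *v axis q 1)"
        using 2 matrix_vector_mul_assoc[of A X "axis q 1"] matrix_vector_mult_basis[of "A ** X" q]
        by simp
      moreover have "(X *v axis q 1)$i = 0" if "i \<notin> J \<union> row_supp X" for i
      proof -
        have "X $ i = 0" using that by (simp add: row_supp_def row_def vec_eq_iff)
        then show ?thesis by (simp add: matrix_vector_mul_component)
      qed
      ultimately show ?thesis by blast
    qed
  qed
qed

lemma lower_ric_sparse_kernel:
  fixes A :: "real^'n^'m"
  assumes "lower_ric s A < 1" "card {i. z$i \<noteq> 0} \<le> s" "A *v z = 0"
  shows "z = 0"
proof -
  let ?D = "{d. 0 \<le> d \<and> (\<forall>x::real^'n. card {i. x $ i \<noteq> 0} \<le> s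
              \<longrightarrow> (1 - d) * (norm x)\<^sup>2 \<le> (norm (A *v x))\<^sup>2)}"
  have "1 \<in> ?D" by simp
  then obtain d where d: "d \<in> ?D" "d < 1"
    using cInf_lessD[of ?D 1] assms(1) unfolding lower_ric_def by blast
  then have "(1 - d) * (norm z)\<^sup>2 \<le> 0" using assms by auto
  with \<open>d < 1\<close> show ?thesis by (simp add: mult_le_0_iff)
qed

lemma in_row_supp_if_column_in_span:
  fixes A :: "real^'n^'m" and X :: "real^'r^'n"
  assumes span: "column j A \<in> span (concat_cols A J (A ** X))"
    and jJ: "j \<notin> J"
    and card: "card (insert j J \<union> row_supp X) \<le> s"
    and ric: "lower_ric s A < 1"
  shows "j \<in> row_supp X"
proof (rule ccontr)
  assume jS: "j \<notin> row_supp X"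
  obtain y where y: "column j A = A *v y" "\<forall>i. i \<notin> J \<union> row_supp X \<longrightarrow> y$i = 0"
    using span span_concat_cols_subset[of A J X] by blast
  define z where "z = axis j (1::real) - y"
  have "A *v z = 0"
    using y(1) by (simp add: z_def matrix_vector_mult_diff_distrib matrix_vector_mult_basis)
  moreover have "{i. z$i \<noteq> 0} \<subseteq> insert j J \<union> row_supp X"
    using y(2) by (auto simp: z_def axis_def)
  then have "card {i. z$i \<noteq> 0} \<le> s" using card card_mono[of "insert j J \<union> row_supp X"]
    by (meson finite order_trans)
  moreover have "z $ j = 1" using y(2) jS jJ by (simp add: z_def axis_def)
  ultimately show False using lower_ric_sparse_kernel[OF ric] by force
qed

lemma separating_functional:
  fixes v :: "real^'r"
  assumes "v \<notin> span W"
  shows "\<exists>c. v \<bullet> c = 1 \<and> (\<forall>w\<in>W. w \<bullet> c = 0)"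
proof -
  obtain p q where p: "p \<in> span W" and q: "\<And>w. w \<in> span W \<Longrightarrow> orthogonal q w"
    and vpq: "v = p + q"
    using orthogonal_subspace_decomp_exists by blast
  have "q \<noteq> 0" using assms p vpq by auto
  moreover have "p \<bullet> q = 0" using q[OF p] by (simp add: orthogonal_def inner_commute)
  then have "v \<bullet> q = q \<bullet> q" using vpq by (simp add: inner_add_left)
  moreover have "w \<bullet> q = 0" if "w \<in> W" for w
    using q[OF span_base[OF that]] by (simp add: orthogonal_def inner_commute)
  ultimately show ?thesis by (intro exI[of _ "q /\<^sub>R (q \<bullet> q)"]) auto
qed

lemma general_position_dual:
  fixes X :: "real^'r^'n"
  assumes genpos: "\<forall>S. S \<subseteq> row_supp X \<and> card S = CARD('r) \<longrightarrow>
                    inj_on (\<lambda>i. row i X) S \<and> independent ((\<lambda>i. row i X) ` S)"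
    and T: "j \<in> T" "T \<subseteq> row_supp X" "card T \<le> CARD('r)"
    and supp: "CARD('r) \<le> card (row_supp X)"
  shows "\<exists>c. row j X \<bullet> c = 1 \<and> (\<forall>i\<in>T - {j}. row i X \<bullet> c = 0)"
proof -
  obtain S' where S': "T \<subseteq> S'" "S' \<subseteq> row_supp X" "card S' = CARD('r)"
    using exists_subset_between[OF T(3) supp T(2)] by auto
  have inj: "inj_on (\<lambda>i. row i X) S'" and ind: "independent ((\<lambda>i. row i X) ` S')"
    using genpos S' by auto
  have "(\<lambda>i. row i X) ` (S' - {j}) = (\<lambda>i. row i X) ` S' - {row j X}"
    using inj S'(1) T(1) by (auto simp: inj_on_def)
  moreover have "row j X \<notin> span ((\<lambda>i. row i X) ` S' - {row j X})"
    using ind S'(1) T(1) unfolding dependent_def by auto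
  ultimately have "row j X \<notin> span ((\<lambda>i. row i X) ` (S' - {j}))" by simp
  then obtain c where "row j X \<bullet> c = 1" "\<forall>w\<in>(\<lambda>i. row i X) ` (S' - {j}). w \<bullet> c = 0"
    using separating_functional by blast
  then show ?thesis using S'(1) by auto
qed

text \<open>Direction (a) \<Rightarrow> (b): a functional c with x^j c = 1 that kills the rows x^i,
  i \<notin> J \<union> {j}, expresses a_j via B c = \<Sum>_i (x^i c) a_i and columns indexed by J.\<close>
lemma column_in_span_if_dual:
  fixes A :: "real^'n^'m" and X :: "real^'r^'n"
  assumes c1: "row j X \<bullet> c = 1"
    and c0: "\<And>i. i \<in> row_supp X - J \<Longrightarrow> i \<noteq> j \<Longrightarrow> row i X \<bullet> c = 0"
  shows "column j A \<in> span (concat_cols A J (A ** X))"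
proof -
  let ?C = "concat_cols A J (A ** X)"
  define f where "f i = (row i X \<bullet> c) *\<^sub>R column i A" for i
  have "(A ** X) *v c = A *v (X *v c)" by (simp add: matrix_vector_mul_assoc)
  also have "\<dots> = (\<Sum>i\<in>UNIV. (X *v c)$i *\<^sub>R column i A)"
    by (simp only: matrix_mult_sum scalar_mult_eq_scaleR)
  also have "\<dots> = (\<Sum>i\<in>UNIV. f i)"
    by (simp add: f_def matrix_vector_mul_component row_def)
  also have "\<dots> = f j + (\<Sum>i\<in>UNIV - {j}. f i)"
    by (simp add: sum.remove)
  finally have "column j A = (A ** X) *v c - (\<Sum>i\<in>UNIV - {j}. f i)"
    using c1 by (simp add: f_def)
  also have "\<dots> \<in> span ?C"
  proof (rule span_diff)
    show "(A ** X) *v c \<in> span ?C"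
      using matrix_vector_mult_in_span_columns span_mono[of "columns (A ** X)" ?C]
      unfolding concat_cols_def by blast
    have "f i \<in> span ?C" if "i \<noteq> j" for i
    proof (cases "i \<in> J")
      case True
      then show ?thesis by (auto simp: f_def concat_cols_def intro: span_scale span_base)
    next
      case False
      then have "row i X \<bullet> c = 0" using c0 that by (cases "i \<in> row_supp X") (auto simp: row_supp_def)
      then show ?thesis by (simp add: f_def span_zero)
    qed
    then show "(\<Sum>i\<in>UNIV - {j}. f i) \<in> span ?C" by (auto intro: span_sum)
  qed
  finally show ?thesis .
qed

theorem theorem3:
  fixes A :: "real^'n^'m" and X :: "real^'r^'n" and B :: "real^'r^'m"
    and k l :: nat and I :: "'n set"
  assumes dims: "CARD('r) \<le> CARD('m)" "CARD('m) < CARD('n)"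
    and kdef: "k = card (row_supp X)"
    and rk: "CARD('r) \<le> k"
    and Bdef: "B = A ** X"
    and Bfull: "rank B = CARD('r)"
    and l: "1 \<le> l" "l \<le> CARD('r)"
    and ric: "0 \<le> lower_ric (2 * k - CARD('r) + l) A" "lower_ric (2 * k - CARD('r) + l) A < 1"
    and genpos: "\<forall>S. S \<subseteq> row_supp X \<and> card S = CARD('r) \<longrightarrow>
                    inj_on (\<lambda>i. row i X) S \<and> independent ((\<lambda>i. row i X) ` S)"
    and I1: "card I \<le> min (2 * (k - CARD('r)) + l) k"
    and I2: "card (I - row_supp X) \<le> k - CARD('r) + l"
    and I3: "card (I \<inter> row_supp X) \<ge> k - CARD('r) + 1"
    and j: "j \<in> I"
  shows "(j \<in> row_supp X \<longleftrightarrow> rank_concat A (I - {j}) B = rank_concat A I B)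
       \<and> (rank_concat A (I - {j}) B = rank_concat A I B \<longleftrightarrow>
            column j A \<bullet> orth_proj_perp (span (concat_cols A (I - {j}) B)) (column j A) = 0)"
proof -
  let ?S = "row_supp X"
  have key: "j \<in> ?S \<longleftrightarrow> column j A \<in> span (concat_cols A (I - {j}) B)"
  proof
    assume jS: "j \<in> ?S"
    \<comment> \<open>S - I has at most r - 1 elements because |S \<inter> I| \<ge> k - r + 1.\<close>
    have "card (?S - I) = k - card (I \<inter> ?S)"
      using kdef by (simp add: card_Diff_subset_Int Int_commute)
    moreover have "0 < CARD('r)" by simp
    ultimately have "card (?S - I) < CARD('r)" using I3 rk by linarith
    then have "card (insert j (?S - I)) \<le> CARD('r)" by (simp add: card_insert_if)
    then obtain c where "row j X \<bullet> c = 1" "\<forall>i\<in>insert j (?S - I) - {j}. row i X \<bullet> c = 0"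
      using general_position_dual[OF genpos, of j "insert j (?S - I)"] jS kdef rk by auto
    then show "column j A \<in> span (concat_cols A (I - {j}) B)"
      unfolding Bdef by (intro column_in_span_if_dual) auto
  next
    assume in_span: "column j A \<in> span (concat_cols A (I - {j}) B)"
    have "insert j (I - {j}) \<union> ?S = (I - ?S) \<union> ?S" using j by auto
    moreover have "card ((I - ?S) \<union> ?S) = card (I - ?S) + k"
      using kdef by (subst card_Un_disjoint) auto
    ultimately have "card (insert j (I - {j}) \<union> ?S) \<le> 2 * k - CARD('r) + l"
      using I2 rk by simp
    then show "j \<in> ?S"
      using in_row_supp_if_column_in_span[OF in_span[unfolded Bdef] _ _ ric(2)] by blast
  qed
  then show ?thesis
    using rank_concat_remove_eq_iff[OF j] inner_orth_proj_perp_eq_0_iff by blast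
qed

end
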